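(* Let $X$ be a gamble, $I=[\inf X,\sup X]$, $\phi:I\to\mathbb{R}$ convex and $\psi:I\to\mathbb{R}$ concave. Let $\underline{P}$ be a 2-coherent lower prevision defined on a set of gambles containing $X$ and the other gambles involved (e.g. on all gambles), with conjugate $\overline{P}$. Define $x_L=l(\underline{P}(X))$, $x_U=u(\underline{P}(X))$, $z_L=l(\overline{P}(X))$, $z_U=u(\overline{P}(X))$. (a1) If $\inf X\le x_L<x_U\le\sup X$, then $$\underline{P}(\psi(X))\le\psi(x_U)\frac{\underline{P}(X)-x_L}{x_U-x_L}+\psi(x_L)\Big(1-\frac{\underline{P}(X)-x_L}{x_U-x_L}\Big)\le\psi(\underline{P}(X)).$$ (a2) If $\inf X\le z_L<z_U\le\sup X$ and $\psi(z_L)\le\psi(z_U)$, then $$\overline{P}(\psi(X))\le\psi(z_U)\frac{\overline{P}(X)-z_L}{z_U-z_L}+\psi(z_L)\Big(1-\frac{\overline{P}(X)-z_L}{z_U-z_L}\Big)\le\psi(\overline{P}(X)).$$ (b1) If $\inf X\le z_L<z_U\le\sup X$, then $$\overline{P}(\phi(X))\ge\phi(z_U)\frac{\overline{P}(X)-z_L}{z_U-z_L}+\phi(z_L)\Big(1-\frac{\overline{P}(X)-z_L}{z_U-z_L}\Big)\ge\phi(\overline{P}(X)).$$ (b2) If $\inf X\le x_L<x_U\le\sup X$ and $\phi(x_L)\le\phi(x_U)$, then $$\underline{P}(\phi(X))\ge\phi(x_U)\frac{\underline{P}(X)-x_L}{x_U-x_L}+\phi(x_L)\Big(1-\frac{\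underline{P}(X)-x_L}{x_U-x_L}\Big)\ge\phi(\underline{P}(X)).$$
   Context: $\Pi$ is a partition of the sure event into pairwise disjoint non-impossible events; a gamble is a bounded map $X:\Pi\to\mathbb{R}$ with image set $Im(X)=\{X(\omega):\omega\in\Pi\}$; $f(X)$ denotes $\omega\mapsto f(X(\omega))$. For $k\in[\inf X,\sup X]$, $l(k)=\sup\{x\in Im(X):x\le k\}$ and $u(k)=\inf\{x\in Im(X):x\ge k\}$. A lower prevision $\underline{P}:\mathcal{D}\to\mathbb{R}$ is 2-coherent iff for all $X_0,X_1\in\mathcal{D}$, $s_1\ge 0$, $s_0\in\mathbb{R}$, $\sup[s_1(X_1-\underline{P}(X_1))-s_0(X_0-\underline{P}(X_0))]\ge 0$; its conjugate is $\overline{P}(Y)=-\underline{P}(-Y)$. *)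

theory Defs
  imports "HOL-Analysis.Analysis"
begin

text \<open>The partition Pi of the sure event is modelled by the (nonempty) type 'w:
  each element of 'w is an atom of Pi. A gamble is a bounded real map on 'w.\<close>

definition gamble :: "('w \<Rightarrow> real) \<Rightarrow> bool" where
  "gamble X \<longleftrightarrow> bounded (range X)"

text \<open>l(k) = sup of image points below k, u(k) = inf of image points above k,
  taken in the extended reals (empty sup = -infinity, empty inf = +infinity).\<close>

definition l_img :: "('w \<Rightarrow> real) \<Rightarrow> real \<Rightarrow> ereal" where
  "l_img X k = Sup (ereal ` {x \<in> range X. x \<le> k})"

definition u_img :: "('w \<Rightarrow> real) \<Rightarrow> real \<Rightarrow> ereal" where
  "u_img X k = Inf (ereal ` {x \<in> range X. k \<le> x})"

definition coherent2 :: "('w \<Rightarrow> real) set \<Rightarrow> (('w \<Rightarrow> real) \<Rightarrow> real) \<Rightarrow> bool" where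
  "coherent2 D P \<longleftrightarrow>
     (\<forall>X0\<in>D. \<forall>X1\<in>D. \<forall>s1::real. \<forall>s0::real. s1 \<ge> 0 \<longrightarrow>
        Sup (range (\<lambda>w. s1 * (X1 w - P X1) - s0 * (X0 w - P X0))) \<ge> 0)"

definition conj_upper :: "(('w \<Rightarrow> real) \<Rightarrow> real) \<Rightarrow> ('w \<Rightarrow> real) \<Rightarrow> real" where
  "conj_upper P Y = - P (\<lambda>w. - Y w)"

end

theory Submission
  imports Defs
begin

(* The image of X has no points strictly between l(k) and u(k).  Hence on the range of X a
   convex function lies above the line through its values at l(k) and u(k), and a concave one
   below it, while between l(k) and u(k) the inequalities reverse.  2-coherence turns a pointwise
   bound Y <= m X + c into P Y <= m P X + c for every slope m, but a bound m X + c <= Y into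
   m P X + c <= P Y only for m >= 0, since the multiplier s1 must be nonnegative; for the
   conjugate upper prevision the roles are exchanged.  This is why (a2) and (b2) require the
   chord to be nondecreasing. *)

abbreviation chord :: "(real \<Rightarrow> real) \<Rightarrow> real \<Rightarrow> real \<Rightarrow> real \<Rightarrow> real" where
  "chord f a b x \<equiv> f b * ((x - a) / (b - a)) + f a * (1 - (x - a) / (b - a))"

lemma chord_eq_affine: "chord f a b x = f a + (f b - f a) / (b - a) * (x - a)"
proof -
  have "f b * t + f a * (1 - t) = f a + (f b - f a) * t" for t :: real
    by (simp add: algebra_simps)
  moreover have "(f b - f a) / (b - a) * (x - a) = (f b - f a) * ((x - a) / (b - a))"
    by simp
  ultimately show ?thesis
    by metis
qed

lemma chord_uminus: "chord (\<lambda>x. - f x) a b x = - chord f a b x"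
  by (simp only: mult_minus_left minus_add_distrib)

lemma convex_on_le_chord:
  fixes f :: "real \<Rightarrow> real"
  assumes f: "convex_on I f" and ab: "a \<in> I" "b \<in> I" "a < b" and x: "x \<in> {a..b}"
  shows "f x \<le> chord f a b x"
proof -
  have "{a..b} \<subseteq> I"
    using f ab by (intro atMostAtLeast_subset_convex convex_on_imp_convex)
  then have "convex_on {a..b} f"
    using f by (simp add: convex_on_subset)
  then have "f x \<le> (f b - f a) / (b - a) * (x - a) + f a"
    using x by (rule convex_onD_Icc')
  then show ?thesis
    unfolding chord_eq_affine by linarith
qed

lemma divide_diff_swap: "(y - x) / (b - a) = (x - y) / (a - b)" for x y a b :: real
  by (metis minus_diff_eq minus_divide_divide)

lemma convex_on_chord_le_outside:
  fixes f :: "real \<Rightarrow> real"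
  assumes f: "convex_on I f" and ab: "a \<in> I" "b \<in> I" "a < b"
    and x: "x \<in> I" "x \<notin> {a<..<b}"
  shows "chord f a b x \<le> f x"
proof -
  define s where "s = (f b - f a) / (b - a)"
  consider "x < a" | "x = a" | "x = b" | "b < x"
    using x by force
  then have "s * (x - a) \<le> f x - f a"
  proof cases
    case 1
    have "(f x - f b) / (x - b) \<le> s"
      using convex_on_slope_le(2)[OF f x(1) ab(2) 1 ab(3)] by (simp add: s_def divide_diff_swap)
    then have "s * (x - b) \<le> f x - f b"
      using 1 ab by (simp add: divide_le_eq mult.commute)
    then show ?thesis
      using ab by (simp add: s_def field_simps)
  next
    case 4
    have "s \<le> (f x - f a) / (x - a)"
      using convex_on_slope_le(1)[OF f ab(1) x(1) ab(3) 4] by (simp add: s_def divide_diff_swap)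
    then show ?thesis
      using ab 4 by (simp add: le_divide_eq)
  qed (use ab in \<open>simp_all add: s_def\<close>)
  then show ?thesis
    unfolding chord_eq_affine s_def[symmetric] by linarith
qed

lemma concave_on_chord_le:
  fixes f :: "real \<Rightarrow> real"
  assumes "concave_on I f" "a \<in> I" "b \<in> I" "a < b" "x \<in> {a..b}"
  shows "chord f a b x \<le> f x"
proof -
  have "- f x \<le> chord (\<lambda>x. - f x) a b x"
    using assms by (intro convex_on_le_chord) (auto simp: concave_on_def)
  then show ?thesis
    unfolding chord_uminus by linarith
qed

lemma concave_on_le_chord_outside:
  fixes f :: "real \<Rightarrow> real"
  assumes "concave_on I f" "a \<in> I" "b \<in> I" "a < b" "x \<in> I" "x \<notin> {a<..<b}"
  shows "f x \<le> chord f a b x"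
proof -
  have "chord (\<lambda>x. - f x) a b x \<le> - f x"
    using assms by (intro convex_on_chord_le_outside) (auto simp: concave_on_def)
  then show ?thesis
    unfolding chord_uminus by linarith
qed

lemma coherent2_bound:
  assumes "coherent2 D P" "X0 \<in> D" "X1 \<in> D" "s1 \<ge> 0"
    and bound: "\<And>w. s1 * X1 w - s0 * X0 w \<le> c"
  shows "s1 * P X1 - s0 * P X0 \<le> c"
proof -
  have "0 \<le> Sup (range (\<lambda>w. s1 * (X1 w - P X1) - s0 * (X0 w - P X0)))"
    using assms(1-4) unfolding coherent2_def by blast
  also have "\<dots> \<le> c - s1 * P X1 + s0 * P X0"
    by (rule cSUP_least) (use bound in \<open>auto simp: algebra_simps\<close>)
  finally show ?thesis
    by simp
qed

lemma coherent2_le_affine: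
  assumes "coherent2 D P" "X \<in> D" "Y \<in> D" "\<And>w. Y w \<le> m * X w + c"
  shows "P Y \<le> m * P X + c"
  using coherent2_bound[of D P X Y 1 m c] assms by (simp add: algebra_simps)

lemma coherent2_affine_le:
  assumes "coherent2 D P" "X \<in> D" "Y \<in> D" "m \<ge> 0" "\<And>w. m * X w + c \<le> Y w"
  shows "m * P X + c \<le> P Y"
  using coherent2_bound[of D P Y X m 1 "- c"] assms by (simp add: algebra_simps)

lemma coherent2_conj_upper_le_affine:
  assumes "coherent2 D P" "(\<lambda>w. - X w) \<in> D" "(\<lambda>w. - Y w) \<in> D" "m \<ge> 0"
    and "\<And>w. Y w \<le> m * X w + c"
  shows "conj_upper P Y \<le> m * conj_upper P X + c"
  using coherent2_bound[of D P "\<lambda>w. - Y w" "\<lambda>w. - X w" m 1 c] assms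
  by (simp add: conj_upper_def algebra_simps)

lemma coherent2_affine_le_conj_upper:
  assumes "coherent2 D P" "(\<lambda>w. - X w) \<in> D" "(\<lambda>w. - Y w) \<in> D"
    and "\<And>w. m * X w + c \<le> Y w"
  shows "m * conj_upper P X + c \<le> conj_upper P Y"
  using coherent2_bound[of D P "\<lambda>w. - X w" "\<lambda>w. - Y w" 1 m "- c"] assms
  by (simp add: conj_upper_def algebra_simps)

abbreviation l_u_gap :: "('w \<Rightarrow> real) \<Rightarrow> real \<Rightarrow> bool" where
  "l_u_gap X k \<equiv> ereal (Inf (range X)) \<le> l_img X k \<and> l_img X k < u_img X k
     \<and> u_img X k \<le> ereal (Sup (range X))"

lemma l_img_le: "l_img X k \<le> ereal k"
  unfolding l_img_def by (rule Sup_least) auto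

lemma u_img_ge: "ereal k \<le> u_img X k"
  unfolding u_img_def by (rule Inf_greatest) auto

lemma le_l_img: "X w \<le> k \<Longrightarrow> ereal (X w) \<le> l_img X k"
  unfolding l_img_def by (rule Sup_upper) auto

lemma u_img_le: "k \<le> X w \<Longrightarrow> u_img X k \<le> ereal (X w)"
  unfolding u_img_def by (rule Inf_lower) auto

lemma l_u_gap_real:
  assumes gap: "l_u_gap X k"
  defines "a \<equiv> real_of_ereal (l_img X k)" and "b \<equiv> real_of_ereal (u_img X k)"
  shows "a \<in> {Inf (range X)..Sup (range X)}" "b \<in> {Inf (range X)..Sup (range X)}"
    and "a < b" "k \<in> {a..b}" "\<And>w. X w \<notin> {a<..<b}"
proof -
  have l: "l_img X k = ereal a"
    using gap l_img_le[of X k] by (cases "l_img X k") (auto simp: a_def)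
  have u: "u_img X k = ereal b"
    using gap u_img_ge[of k X] by (cases "u_img X k") (auto simp: b_def)
  have "Inf (range X) \<le> a" "a < b" "b \<le> Sup (range X)" "a \<le> k" "k \<le> b"
    using gap l_img_le[of X k] u_img_ge[of k X] by (simp_all add: l u)
  then show "a \<in> {Inf (range X)..Sup (range X)}" "b \<in> {Inf (range X)..Sup (range X)}"
      "a < b" "k \<in> {a..b}"
    by auto
  show "X w \<notin> {a<..<b}" for w
    using le_l_img[of X w k] u_img_le[of k X w] by (cases "X w \<le> k") (auto simp: l u)
qed

lemma gamble_in_Inf_Sup:
  assumes "gamble X"
  shows "X w \<in> {Inf (range X)..Sup (range X)}"
proof -
  have "bdd_below (range X)" "bdd_above (range X)"
    using assms unfolding gamble_def by (simp_all add: bounded_imp_bdd_below bounded_imp_bdd_above)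
  then show ?thesis
    by (auto intro: cInf_lower cSup_upper)
qed

context
  fixes D :: "('w \<Rightarrow> real) set" and P :: "('w \<Rightarrow> real) \<Rightarrow> real"
    and X :: "'w \<Rightarrow> real" and I :: "real set" and a b :: real
  assumes coh: "coherent2 D P" and X_in: "\<And>w. X w \<in> I"
    and ab: "a \<in> I" "b \<in> I" "a < b" and gap: "\<And>w. X w \<notin> {a<..<b}"
begin

lemma coherent2_concave_le_chord:
  assumes \<psi>: "concave_on I \<psi>" and "X \<in> D" "(\<lambda>w. \<psi> (X w)) \<in> D"
  shows "P (\<lambda>w. \<psi> (X w)) \<le> chord \<psi> a b (P X)"
proof -
  define s where "s = (\<psi> b - \<psi> a) / (b - a)"
  have "\<psi> (X w) \<le> s * X w + (\<psi> a - s * a)" for w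
    using concave_on_le_chord_outside[OF \<psi> ab X_in gap]
    unfolding chord_eq_affine s_def[symmetric] by (simp add: algebra_simps)
  then have "P (\<lambda>w. \<psi> (X w)) \<le> s * P X + (\<psi> a - s * a)"
    by (rule coherent2_le_affine[OF coh assms(2,3)])
  then show ?thesis
    unfolding chord_eq_affine s_def[symmetric] by (simp add: algebra_simps)
qed

lemma coherent2_chord_le_convex:
  assumes \<phi>: "convex_on I \<phi>" and "\<phi> a \<le> \<phi> b" and "X \<in> D" "(\<lambda>w. \<phi> (X w)) \<in> D"
  shows "chord \<phi> a b (P X) \<le> P (\<lambda>w. \<phi> (X w))"
proof -
  define s where "s = (\<phi> b - \<phi> a) / (b - a)"
  have "s \<ge> 0"
    using assms(2) ab(3) by (simp add: s_def)
  have "s * X w + (\<phi> a - s * a) \<le> \<phi> (X w)" for w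
    using convex_on_chord_le_outside[OF \<phi> ab X_in gap]
    unfolding chord_eq_affine s_def[symmetric] by (simp add: algebra_simps)
  then have "s * P X + (\<phi> a - s * a) \<le> P (\<lambda>w. \<phi> (X w))"
    by (rule coherent2_affine_le[OF coh assms(3,4) \<open>s \<ge> 0\<close>])
  then show ?thesis
    unfolding chord_eq_affine s_def[symmetric] by (simp add: algebra_simps)
qed

lemma conj_upper_concave_le_chord:
  assumes \<psi>: "concave_on I \<psi>" and "\<psi> a \<le> \<psi> b"
    and "(\<lambda>w. - X w) \<in> D" "(\<lambda>w. - \<psi> (X w)) \<in> D"
  shows "conj_upper P (\<lambda>w. \<psi> (X w)) \<le> chord \<psi> a b (conj_upper P X)"
proof -
  define s where "s = (\<psi> b - \<psi> a) / (b - a)"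
  have "s \<ge> 0"
    using assms(2) ab(3) by (simp add: s_def)
  have "\<psi> (X w) \<le> s * X w + (\<psi> a - s * a)" for w
    using concave_on_le_chord_outside[OF \<psi> ab X_in gap]
    unfolding chord_eq_affine s_def[symmetric] by (simp add: algebra_simps)
  then have "conj_upper P (\<lambda>w. \<psi> (X w)) \<le> s * conj_upper P X + (\<psi> a - s * a)"
    by (rule coherent2_conj_upper_le_affine[OF coh assms(3,4) \<open>s \<ge> 0\<close>])
  then show ?thesis
    unfolding chord_eq_affine s_def[symmetric] by (simp add: algebra_simps)
qed

lemma conj_upper_chord_le_convex:
  assumes \<phi>: "convex_on I \<phi>" and "(\<lambda>w. - X w) \<in> D" "(\<lambda>w. - \<phi> (X w)) \<in> D"
  shows "chord \<phi> a b (conj_upper P X) \<le> conj_upper P (\<lambda>w. \<phi> (X w))"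
proof -
  define s where "s = (\<phi> b - \<phi> a) / (b - a)"
  have "s * X w + (\<phi> a - s * a) \<le> \<phi> (X w)" for w
    using convex_on_chord_le_outside[OF \<phi> ab X_in gap]
    unfolding chord_eq_affine s_def[symmetric] by (simp add: algebra_simps)
  then have "s * conj_upper P X + (\<phi> a - s * a) \<le> conj_upper P (\<lambda>w. \<phi> (X w))"
    by (rule coherent2_affine_le_conj_upper[OF coh assms(2,3)])
  then show ?thesis
    unfolding chord_eq_affine s_def[symmetric] by (simp add: algebra_simps)
qed

end

theorem theorem5:
  fixes X :: "'w \<Rightarrow> real"
    and D :: "('w \<Rightarrow> real) set"
    and P :: "('w \<Rightarrow> real) \<Rightarrow> real"
    and \<phi> \<psi> :: "real \<Rightarrow> real"
  assumes gX: "gamble X"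
    and convphi: "convex_on {Inf (range X)..Sup (range X)} \<phi>"
    and concpsi: "concave_on {Inf (range X)..Sup (range X)} \<psi>"
    and Dg: "\<forall>Y\<in>D. gamble Y"
    and coh: "coherent2 D P"
    and inD: "X \<in> D" "(\<lambda>w. - X w) \<in> D"
      "(\<lambda>w. \<psi> (X w)) \<in> D" "(\<lambda>w. - \<psi> (X w)) \<in> D"
      "(\<lambda>w. \<phi> (X w)) \<in> D" "(\<lambda>w. - \<phi> (X w)) \<in> D"
  defines "xL \<equiv> real_of_ereal (l_img X (P X))"
    and "xU \<equiv> real_of_ereal (u_img X (P X))"
    and "zL \<equiv> real_of_ereal (l_img X (conj_upper P X))"
    and "zU \<equiv> real_of_ereal (u_img X (conj_upper P X))"
  shows
    "(ereal (Inf (range X)) \<le> l_img X (P X) \<and> l_img X (P X) < u_img X (P X)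
        \<and> u_img X (P X) \<le> ereal (Sup (range X)) \<longrightarrow>
       P (\<lambda>w. \<psi> (X w))
         \<le> \<psi> xU * ((P X - xL) / (xU - xL)) + \<psi> xL * (1 - (P X - xL) / (xU - xL))
       \<and> \<psi> xU * ((P X - xL) / (xU - xL)) + \<psi> xL * (1 - (P X - xL) / (xU - xL))
         \<le> \<psi> (P X))
   \<and> (ereal (Inf (range X)) \<le> l_img X (conj_upper P X)
        \<and> l_img X (conj_upper P X) < u_img X (conj_upper P X)
        \<and> u_img X (conj_upper P X) \<le> ereal (Sup (range X)) \<and> \<psi> zL \<le> \<psi> zU \<longrightarrow>
       conj_upper P (\<lambda>w. \<psi> (X w))
         \<le> \<psi> zU * ((conj_upper P X - zL) / (zU - zL))
           + \<psi> zL * (1 - (conj_upper P X - zL) / (zU - zL))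
       \<and> \<psi> zU * ((conj_upper P X - zL) / (zU - zL))
           + \<psi> zL * (1 - (conj_upper P X - zL) / (zU - zL))
         \<le> \<psi> (conj_upper P X))
   \<and> (ereal (Inf (range X)) \<le> l_img X (conj_upper P X)
        \<and> l_img X (conj_upper P X) < u_img X (conj_upper P X)
        \<and> u_img X (conj_upper P X) \<le> ereal (Sup (range X)) \<longrightarrow>
       conj_upper P (\<lambda>w. \<phi> (X w))
         \<ge> \<phi> zU * ((conj_upper P X - zL) / (zU - zL))
           + \<phi> zL * (1 - (conj_upper P X - zL) / (zU - zL))
       \<and> \<phi> zU * ((conj_upper P X - zL) / (zU - zL))
           + \<phi> zL * (1 - (conj_upper P X - zL) / (zU - zL))
         \<ge> \<phi> (conj_upper P X))
   \<and> (ereal (Inf (range X)) \<le> l_img X (P X) \<and> l_img X (P X) < u_img X (P X)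
        \<and> u_img X (P X) \<le> ereal (Sup (range X)) \<and> \<phi> xL \<le> \<phi> xU \<longrightarrow>
       P (\<lambda>w. \<phi> (X w))
         \<ge> \<phi> xU * ((P X - xL) / (xU - xL)) + \<phi> xL * (1 - (P X - xL) / (xU - xL))
       \<and> \<phi> xU * ((P X - xL) / (xU - xL)) + \<phi> xL * (1 - (P X - xL) / (xU - xL))
         \<ge> \<phi> (P X))"
proof -
  have X_in: "\<And>w. X w \<in> {Inf (range X)..Sup (range X)}"
    using gX by (rule gamble_in_Inf_Sup)
  have lower: "P (\<lambda>w. \<psi> (X w)) \<le> chord \<psi> xL xU (P X) \<and> chord \<psi> xL xU (P X) \<le> \<psi> (P X)
      \<and> (\<phi> xL \<le> \<phi> xU \<longrightarrow> chord \<phi> xL xU (P X) \<le> P (\<lambda>w. \<phi> (X w)))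
      \<and> \<phi> (P X) \<le> chord \<phi> xL xU (P X)"
    if "l_u_gap X (P X)"
  proof -
    note gap = l_u_gap_real[OF that, folded xL_def xU_def]
    show ?thesis
      using coherent2_concave_le_chord[OF coh X_in gap(1-3,5) concpsi inD(1,3)]
        coherent2_chord_le_convex[OF coh X_in gap(1-3,5) convphi _ inD(1,5)]
        concave_on_chord_le[OF concpsi gap(1-4)] convex_on_le_chord[OF convphi gap(1-4)]
      by blast
  qed
  have upper: "(\<psi> zL \<le> \<psi> zU \<longrightarrow> conj_upper P (\<lambda>w. \<psi> (X w)) \<le> chord \<psi> zL zU (conj_upper P X))
      \<and> chord \<psi> zL zU (conj_upper P X) \<le> \<psi> (conj_upper P X)
      \<and> chord \<phi> zL zU (conj_upper P X) \<le> conj_upper P (\<lambda>w. \<phi> (X w))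
      \<and> \<phi> (conj_upper P X) \<le> chord \<phi> zL zU (conj_upper P X)"
    if "l_u_gap X (conj_upper P X)"
  proof -
    note gap = l_u_gap_real[OF that, folded zL_def zU_def]
    show ?thesis
      using conj_upper_concave_le_chord[OF coh X_in gap(1-3,5) concpsi _ inD(2,4)]
        conj_upper_chord_le_convex[OF coh X_in gap(1-3,5) convphi inD(2,6)]
        concave_on_chord_le[OF concpsi gap(1-4)] convex_on_le_chord[OF convphi gap(1-4)]
      by blast
  qed
  show ?thesis
    using lower upper by blast
qed

end
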